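(* Let $0<t\le k<n$, $w=n-k$, $M=\binom{n}{t}/\binom{k}{t}$, and suppose $C$ is an $(n,w,n-t+1)_q$ code of size $M$. Then: (i) $C$ is a diameter perfect code in $J_q(n,w)$ (it attains $|C|\cdot|A''_q(n,w,t)|=|J_q(n,w)|$); (ii) the complements (in $[n]$) of the supports of the codewords of $C$ are the blocks of a Steiner system $S(t,k,n)$; (iii) setting $$R=\frac{\binom{n}{t}}{\binom{k}{t}}-\frac{\binom{n-1}{t-1}}{\binom{k-1}{t-1}},\quad a=\Big\lfloor\frac{R}{q-1}\Big\rfloor,\quad b=R-a(q-1),\quad \widetilde P=\frac{M}{2n}\sum_{i=0}^{t-2}(t-1-i)\Lambda_i(t,k,n),$$ it holds that $(q-1)\binom{a}{2}+ba\le\lfloor\widetilde P\rfloor$; (iii') in particular, $q-1\ge R-\lfloor\widetilde P\rfloor$.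
   Context: $\mathbb{Z}_q=\{0,\dots,q-1\}$ (an alphabet); $\mathrm{supp}(x)$ = set of nonzero coordinates, $\mathrm{wt}=|\mathrm{supp}|$; $d$ = Hamming distance; $J_q(n,w)$ = weight-$w$ words of $\mathbb{Z}_q^n$. An $(n,w,d)_q$ code of size $M$ is a subset $C\subseteq J_q(n,w)$ with $|C|=M$ and pairwise distances at least $d$; it is diameter perfect if $|C|\cdot|A|=|J_q(n,w)|$ for some anticode $A$ (set with all pairwise distances at most $D$) of diameter $D<d$. $A''_q(n,w,t)=\{a\in\mathbb{Z}_q^n: a_1=\dots=a_t=0,\ \mathrm{wt}((a_{t+1},\dots,a_n))=w\}$, an anticode of diameter $n-t$. A Steiner system $S(t,k,n)$ is a pair $(N,B)$, $|N|=n$, $B$ a set of $k$-subsets (blocks) with every $t$-subset in exactly one block. $\Lambda_i(t,k,n)=\binom{k}{i}\lambda_{i,k-i}$ (the number of blocks of an $S(t,k,n)$ meeting a fixed block in exactly $i$ points), where $\lambda_{i,j}$ ($0\le i+j\le k$) are defined by $\lambda_{i,0}=\binom{n-i}{t-i}/\binom{k-i}{t-i}$ for $0\le i\le t$, $\lambda_{i,0}=1$ for $t<i\le k$, and $\lambda_{i,j}=\lambda_{i,j-1}-\lambda_{i+1,j-1}$ for $0\le i<i+j\le k$. *)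

theory Defs
  imports Complex_Main
begin

text \<open>Words of length n over the alphabet Z_q = {0..q-1}, coordinates indexed 0..n-1,
  represented as functions nat => nat that vanish outside {0..<n}.\<close>

definition words :: "nat \<Rightarrow> nat \<Rightarrow> (nat \<Rightarrow> nat) set" where
  "words q n = {x. (\<forall>i<n. x i < q) \<and> (\<forall>i\<ge>n. x i = 0)}"

definition supp :: "nat \<Rightarrow> (nat \<Rightarrow> nat) \<Rightarrow> nat set" where
  "supp n x = {i\<in>{..<n}. x i \<noteq> 0}"

definition wt :: "nat \<Rightarrow> (nat \<Rightarrow> nat) \<Rightarrow> nat" where
  "wt n x = card (supp n x)"

definition hdist :: "nat \<Rightarrow> (nat \<Rightarrow> nat) \<Rightarrow> (nat \<Rightarrow> nat) \<Rightarrow> nat" where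
  "hdist n x y = card {i\<in>{..<n}. x i \<noteq> y i}"

definition J :: "nat \<Rightarrow> nat \<Rightarrow> nat \<Rightarrow> (nat \<Rightarrow> nat) set" where
  "J q n w = {x\<in>words q n. wt n x = w}"

definition const_weight_code :: "nat \<Rightarrow> nat \<Rightarrow> nat \<Rightarrow> nat \<Rightarrow> (nat \<Rightarrow> nat) set \<Rightarrow> bool" where
  "const_weight_code q n w d C \<longleftrightarrow> C \<subseteq> J q n w \<and>
     (\<forall>x\<in>C. \<forall>y\<in>C. x \<noteq> y \<longrightarrow> d \<le> hdist n x y)"

definition anticode :: "nat \<Rightarrow> nat \<Rightarrow> nat \<Rightarrow> nat \<Rightarrow> (nat \<Rightarrow> nat) set \<Rightarrow> bool" where
  "anticode q n w D A \<longleftrightarrow> A \<subseteq> J q n w \<and> (\<forall>x\<in>A. \<forall>y\<in>A. hdist n x y \<le> D)"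

definition diameter_perfect :: "nat \<Rightarrow> nat \<Rightarrow> nat \<Rightarrow> nat \<Rightarrow> (nat \<Rightarrow> nat) set \<Rightarrow> bool" where
  "diameter_perfect q n w d C \<longleftrightarrow> const_weight_code q n w d C \<and>
     (\<exists>A D. anticode q n w D A \<and> D < d \<and> card C * card A = card (J q n w))"

definition A2 :: "nat \<Rightarrow> nat \<Rightarrow> nat \<Rightarrow> nat \<Rightarrow> (nat \<Rightarrow> nat) set" where
  "A2 q n w t = {a\<in>words q n. (\<forall>i<t. a i = 0) \<and> card {i. t \<le> i \<and> i < n \<and> a i \<noteq> 0} = w}"

definition steiner :: "nat \<Rightarrow> nat \<Rightarrow> nat \<Rightarrow> 'a set \<Rightarrow> 'a set set \<Rightarrow> bool" where
  "steiner t k n N B \<longleftrightarrow> finite N \<and> card N = n \<and> (\<forall>b\<in>B. b \<subseteq> N \<and> card b = k) \<and>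
     (\<forall>T. T \<subseteq> N \<and> card T = t \<longrightarrow> (\<exists>!b. b \<in> B \<and> T \<subseteq> b))"

text \<open>lambda_{i,j} for S(t,k,n); only meaningful for 0 <= i+j <= k.\<close>
fun lam :: "nat \<Rightarrow> nat \<Rightarrow> nat \<Rightarrow> nat \<Rightarrow> nat \<Rightarrow> real" where
  "lam t k n i 0 = (if i \<le> t then real ((n - i) choose (t - i)) / real ((k - i) choose (t - i)) else 1)"
| "lam t k n i (Suc j) = lam t k n i j - lam t k n (Suc i) j"

definition Lam :: "nat \<Rightarrow> nat \<Rightarrow> nat \<Rightarrow> nat \<Rightarrow> real" where
  "Lam t k n i = real (k choose i) * lam t k n i (k - i)"

end

theory Submission
  imports Defs "HOL-Library.FuncSet"
begin

text \<open>Two distinct codewords differ in at least \<open>n - t + 1\<close> coordinates, so their zero sets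
  (\<open>k\<close>-sets) share at most \<open>t - 1\<close> points, fewer still by the number of coordinates where the
  two words carry the same nonzero symbol. The zero sets therefore cover no \<open>t\<close>-set twice, and
  having \<open>M = C(n,t)/C(k,t)\<close> of them they form a Steiner system; the size of \<open>A''\<close> then gives
  diameter perfection.

  For the bound, count ordered pairs of distinct codewords carrying the same nonzero symbol in a
  coordinate. The intersection numbers \<open>\<Lambda>\<^sub>i\<close> of the Steiner system bound the total by
  \<open>M \<Sum> (t - 1 - i) \<Lambda>\<^sub>i = 2n P\<close>. In each coordinate \<open>R\<close> codewords are nonzero, spread over \<open>q - 1\<close>
  symbols, which yields at least \<open>2((q - 1) C(a,2) + a b)\<close> such pairs. The left side is an
  integer, so \<open>P\<close> may be replaced by its floor, and (iii') follows by elementary algebra.\<close>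

section \<open>Integer convexity\<close>

lemma gbinomial_two: "(x::real) gchoose 2 = x * (x - 1) / 2"
  by (simp add: gbinomial_Suc numeral_2_eq_2 atLeast0_atMost_Suc)

lemma Ints_mult_pred_nonneg:
  fixes x :: "'a::linordered_idom"
  assumes "x \<in> \<int>"
  shows "0 \<le> x * (x - 1)"
proof -
  obtain z where z: "x = of_int z" using assms Ints_cases by blast
  have "0 \<le> z * (z - 1)"
    by (cases "z \<le> 0") (auto intro: mult_nonpos_nonpos)
  then show ?thesis unfolding z by (metis of_int_0_le_iff of_int_1 of_int_diff of_int_mult)
qed

text \<open>Among integer counts with a prescribed total, the number of ordered pairs
  \<open>\<Sum> c v (c v - 1)\<close> is smallest when the counts are as equal as possible; this is the
  tangent-line form of that fact at an arbitrary integer \<open>a\<close>.\<close>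
lemma sum_mult_pred_lower_bound:
  fixes c :: "'b \<Rightarrow> real"
  assumes "finite V" "a \<in> \<int>" "\<And>v. v \<in> V \<Longrightarrow> c v \<in> \<int>"
  shows "real (card V) * (a * (a - 1)) + 2 * a * (sum c V - real (card V) * a)
           \<le> (\<Sum>v\<in>V. c v * (c v - 1))"
proof -
  have "a * (a - 1) + 2 * a * (c v - a) \<le> c v * (c v - 1)" if "v \<in> V" for v
  proof -
    have "0 \<le> (c v - a) * (c v - a - 1)"
      using Ints_mult_pred_nonneg[of "c v - a"] assms(2) assms(3)[OF that] by (simp add: Ints_diff)
    then show ?thesis by (simp add: algebra_simps)
  qed
  then have "(\<Sum>v\<in>V. a * (a - 1) + 2 * a * (c v - a)) \<le> (\<Sum>v\<in>V. c v * (c v - 1))"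
    by (rule sum_mono)
  then show ?thesis
    by (simp add: sum.distrib sum_subtractf flip: sum_distrib_left)
qed

lemma floor_div_remainder_bound:
  fixes R Q :: real
  assumes "0 < Q" "0 \<le> R"
  defines "a \<equiv> \<lfloor>R / Q\<rfloor>"
  shows "R - Q \<le> Q * (of_int a gchoose 2) + (R - of_int a * Q) * of_int a"
proof -
  define b where "b = R - of_int a * Q"
  have a_nonneg: "0 \<le> a" unfolding a_def using assms by simp
  have "of_int a \<le> R / Q" "R / Q < of_int a + 1"
    unfolding a_def by (rule of_int_floor_le, rule real_of_int_floor_add_one_gt)
  then have b_nonneg: "0 \<le> b" and b_less: "b < Q"
    using assms(1) unfolding b_def by (simp_all add: field_simps)
  have "0 \<le> (of_int a - 1) * (Q * (of_int a - 2) + 2 * b)"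
  proof (cases "a \<le> 1")
    case True
    then have "a = 0 \<or> a = 1" using a_nonneg by linarith
    then show ?thesis using b_less by auto
  next
    case False
    then show ?thesis using assms(1) b_nonneg by (intro mult_nonneg_nonneg) simp_all
  qed
  moreover have "2 * (Q * (of_int a gchoose 2) + b * of_int a - (R - Q))
      = (of_int a - 1) * (Q * (of_int a - 2) + 2 * b)"
    unfolding b_def gbinomial_two by (simp add: field_simps)
  ultimately have "0 \<le> 2 * (Q * (of_int a gchoose 2) + b * of_int a - (R - Q))"
    by simp
  then show ?thesis unfolding b_def by simp
qed

lemma card_supersets_of_card:
  assumes "finite A" "I \<subseteq> A" "card I \<le> m"
  shows "card {T. I \<subseteq> T \<and> T \<subseteq> A \<and> card T = m} = (card A - card I) choose (m - card I)"
proof -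
  have fin_I: "finite I" using assms finite_subset by blast
  have "bij_betw (\<lambda>T. T - I) {T. I \<subseteq> T \<and> T \<subseteq> A \<and> card T = m} {S. S \<subseteq> A - I \<and> card S = m - card I}"
  proof (rule bij_betw_byWitness[where f'="\<lambda>S. S \<union> I"])
    show "(\<lambda>S. S \<union> I) ` {S. S \<subseteq> A - I \<and> card S = m - card I} \<subseteq> {T. I \<subseteq> T \<and> T \<subseteq> A \<and> card T = m}"
    proof safe
      fix S assume S: "S \<subseteq> A - I" "card S = m - card I"
      have "finite S" using S assms finite_subset by blast
      then show "card (S \<union> I) = m" using S fin_I assms(3) by (subst card_Un_disjoint) auto
    qed (use assms in auto)
  qed (use fin_I in \<open>auto simp: card_Diff_subset\<close>)
  then have "card {T. I \<subseteq> T \<and> T \<subseteq> A \<and> card T = m} = card {S. S \<subseteq> A - I \<and> card S = m - card I}"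
    by (rule bij_betw_same_card)
  also have "\<dots> = card (A - I) choose (m - card I)" using assms by (simp add: n_subsets)
  finally show ?thesis using assms fin_I by (simp add: card_Diff_subset)
qed

section \<open>Steiner systems\<close>

text \<open>No \<open>t\<close>-set lies in two blocks, so the Steiner number of blocks forces every \<open>t\<close>-set to be
  covered.\<close>
lemma steiner_of_packing:
  assumes N: "finite N"
    and blocks: "\<And>b. b \<in> B \<Longrightarrow> b \<subseteq> N \<and> card b = k"
    and packing: "\<And>b b'. b \<in> B \<Longrightarrow> b' \<in> B \<Longrightarrow> b \<noteq> b' \<Longrightarrow> card (b \<inter> b') < t"
    and size: "card B * (k choose t) = card N choose t"
  shows "steiner t k (card N) N B"
proof -
  let ?tsets = "\<lambda>A. {T. T \<subseteq> A \<and> card T = t}"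
  have finite_block: "finite b" if "b \<in> B" for b
    using blocks[OF that] N finite_subset by blast
  have finite_B: "finite B"
    using blocks N by (intro finite_subset[of B "Pow N"]) auto
  have unique: "b = b'" if "b \<in> B" "b' \<in> B" "T \<subseteq> b" "T \<subseteq> b'" "card T = t" for b b' T
  proof (rule ccontr)
    assume "b \<noteq> b'"
    have "t \<le> card (b \<inter> b')"
      using that finite_block by (metis card_mono Int_greatest finite_Int)
    then show False using packing[OF that(1,2) \<open>b \<noteq> b'\<close>] by simp
  qed
  have "card (\<Union>b\<in>B. ?tsets b) = (\<Sum>b\<in>B. card (?tsets b))"
    using finite_B finite_block unique by (intro card_UN_disjoint) auto
  also have "\<dots> = card B * (k choose t)"
    using blocks finite_block by (simp add: n_subsets)
  also have "\<dots> = card (?tsets N)" using size N by (simp add: n_subsets)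
  finally have "card (\<Union>b\<in>B. ?tsets b) = card (?tsets N)" .
  moreover have "(\<Union>b\<in>B. ?tsets b) \<subseteq> ?tsets N" using blocks by blast
  ultimately have cover: "(\<Union>b\<in>B. ?tsets b) = ?tsets N"
    using N by (intro card_subset_eq) auto
  show ?thesis unfolding steiner_def
  proof (intro conjI allI impI)
    fix T assume T: "T \<subseteq> N \<and> card T = t"
    then obtain b where "b \<in> B" "T \<subseteq> b" using cover by blast
    then show "\<exists>!b. b \<in> B \<and> T \<subseteq> b" using unique T by blast
  qed (use N blocks in auto)
qed

locale steiner_system =
  fixes t k n :: nat and N :: "'a set" and B :: "'a set set"
  assumes steiner: "steiner t k n N B" and t_le_k: "t \<le> k"
begin

lemma finite_points: "finite N" and card_points: "card N = n"
  and block: "b \<in> B \<Longrightarrow> b \<subseteq> N \<and> card b = k"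
  and unique_block: "T \<subseteq> N \<Longrightarrow> card T = t \<Longrightarrow> \<exists>!b. b \<in> B \<and> T \<subseteq> b"
  using steiner unfolding steiner_def by auto

lemma finite_blocks: "finite B"
  using block finite_points by (intro finite_subset[of B "Pow N"]) auto

lemma finite_block: "b \<in> B \<Longrightarrow> finite b"
  using block finite_points finite_subset by blast

lemma card_blocks_containing:
  assumes "I \<subseteq> N" "card I \<le> t"
  shows "card {b\<in>B. I \<subseteq> b} * ((k - card I) choose (t - card I)) = (n - card I) choose (t - card I)"
proof -
  let ?tsets = "\<lambda>b. {T. I \<subseteq> T \<and> T \<subseteq> b \<and> card T = t}"
  have "{T. I \<subseteq> T \<and> T \<subseteq> N \<and> card T = t} = (\<Union>b\<in>{b\<in>B. I \<subseteq> b}. ?tsets b)"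
  proof (intro equalityI subsetI)
    fix T assume "T \<in> {T. I \<subseteq> T \<and> T \<subseteq> N \<and> card T = t}"
    then obtain b where "b \<in> B" "T \<subseteq> b" "I \<subseteq> T" "card T = t" using unique_block by blast
    then show "T \<in> (\<Union>b\<in>{b\<in>B. I \<subseteq> b}. ?tsets b)" by blast
  qed (use block in blast)
  moreover have "card (\<Union>b\<in>{b\<in>B. I \<subseteq> b}. ?tsets b) = (\<Sum>b\<in>{b\<in>B. I \<subseteq> b}. card (?tsets b))"
  proof (rule card_UN_disjoint)
    show "finite {b\<in>B. I \<subseteq> b}" using finite_blocks by simp
    show "\<forall>b\<in>{b\<in>B. I \<subseteq> b}. finite (?tsets b)"
    proof
      fix b assume "b \<in> {b\<in>B. I \<subseteq> b}"
      then have "finite (Pow b)" using finite_block by simp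
      then show "finite (?tsets b)" by (rule finite_subset[rotated]) blast
    qed
    show "\<forall>b\<in>{b\<in>B. I \<subseteq> b}. \<forall>b'\<in>{b\<in>B. I \<subseteq> b}. b \<noteq> b' \<longrightarrow> ?tsets b \<inter> ?tsets b' = {}"
    proof (intro ballI impI equals0I)
      fix b b' T assume b: "b \<in> {b\<in>B. I \<subseteq> b}" "b' \<in> {b\<in>B. I \<subseteq> b}" "b \<noteq> b'"
        and T: "T \<in> ?tsets b \<inter> ?tsets b'"
      then have "T \<subseteq> N" using block by blast
      with T have "\<exists>!c. c \<in> B \<and> T \<subseteq> c" using unique_block by blast
      then show False using b T by blast
    qed
  qed
  moreover have "(\<Sum>b\<in>{b\<in>B. I \<subseteq> b}. card (?tsets b)) = card {b\<in>B. I \<subseteq> b} * ((k - card I) choose (t - card I))"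
    using card_supersets_of_card[OF finite_block] block assms(2) by simp
  ultimately show ?thesis
    using card_supersets_of_card[OF finite_points assms] card_points by simp
qed

lemma blocks_containing_large:
  assumes "b \<in> B" "I \<subseteq> b" "t < card I"
  shows "{b'\<in>B. I \<subseteq> b'} = {b}"
proof -
  obtain T where T: "T \<subseteq> I" "card T = t"
    using assms(3) obtain_subset_with_card_n[of t I] by (metis less_imp_le)
  have "T \<subseteq> N" using T assms block by blast
  show ?thesis
  proof (intro equalityI subsetI)
    fix b' assume "b' \<in> {b'\<in>B. I \<subseteq> b'}"
    then have "b' \<in> B" "T \<subseteq> b'" using T by auto
    moreover have "T \<subseteq> b" using T assms by auto
    ultimately show "b' \<in> {b}" using unique_block[OF \<open>T \<subseteq> N\<close> T(2)] assms(1) by blast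
  qed (use assms in auto)
qed

text \<open>Inclusion-exclusion on the avoided set reproduces the recursion defining \<open>lam\<close>.\<close>
lemma card_blocks_containing_avoiding:
  assumes "b \<in> B" "X \<subseteq> b" "I \<subseteq> b" "I \<inter> X = {}"
  shows "real (card {b'\<in>B. I \<subseteq> b' \<and> b' \<inter> X = {}}) = lam t k n (card I) (card X)"
proof -
  have "finite X" using assms finite_block finite_subset by blast
  then show ?thesis using assms(2-4)
  proof (induction X arbitrary: I rule: finite_induct)
    case empty
    show ?case
    proof (cases "card I \<le> t")
      case True
      have "I \<subseteq> N" using empty(2) block[OF assms(1)] by blast
      from card_blocks_containing[OF this True]
      have "real (card {b\<in>B. I \<subseteq> b}) * real ((k - card I) choose (t - card I)) = real ((n - card I) choose (t - card I))"
        by (metis of_nat_mult)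
      moreover have "(k - card I) choose (t - card I) \<noteq> 0" using True t_le_k by simp
      ultimately show ?thesis using True by (simp add: field_simps)
    next
      case False
      then show ?thesis using blocks_containing_large[OF assms(1) empty(2)] by simp
    qed
  next
    case (insert p X)
    have fin_I: "finite I" using insert.prems(2) finite_block[OF assms(1)] finite_subset by blast
    have "{b'\<in>B. I \<subseteq> b' \<and> b' \<inter> insert p X = {}} =
        {b'\<in>B. I \<subseteq> b' \<and> b' \<inter> X = {}} - {b'\<in>B. insert p I \<subseteq> b' \<and> b' \<inter> X = {}}"
      by blast
    moreover have "{b'\<in>B. insert p I \<subseteq> b' \<and> b' \<inter> X = {}} \<subseteq> {b'\<in>B. I \<subseteq> b' \<and> b' \<inter> X = {}}"
      by auto
    ultimately have "real (card {b'\<in>B. I \<subseteq> b' \<and> b' \<inter> insert p X = {}}) =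
        real (card {b'\<in>B. I \<subseteq> b' \<and> b' \<inter> X = {}}) - real (card {b'\<in>B. insert p I \<subseteq> b' \<and> b' \<inter> X = {}})"
      using finite_blocks by (simp add: card_Diff_subset card_mono of_nat_diff)
    also have "\<dots> = lam t k n (card I) (card X) - lam t k n (card (insert p I)) (card X)"
    proof -
      have "real (card {b'\<in>B. I \<subseteq> b' \<and> b' \<inter> X = {}}) = lam t k n (card I) (card X)"
        by (rule insert.IH) (use insert.prems in auto)
      moreover have "real (card {b'\<in>B. insert p I \<subseteq> b' \<and> b' \<inter> X = {}}) = lam t k n (card (insert p I)) (card X)"
        by (rule insert.IH) (use insert.prems insert.hyps in auto)
      ultimately show ?thesis by simp
    qed
    finally show ?case using insert fin_I by auto
  qed
qed

lemma card_blocks_meeting: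
  assumes "b \<in> B"
  shows "real (card {b'\<in>B. card (b' \<inter> b) = i}) = Lam t k n i"
proof -
  let ?traces = "{I. I \<subseteq> b \<and> card I = i}"
  let ?with_trace = "\<lambda>I. {b'\<in>B. I \<subseteq> b' \<and> b' \<inter> (b - I) = {}}"
  have trace_iff: "I \<subseteq> b \<Longrightarrow> (I \<subseteq> b' \<and> b' \<inter> (b - I) = {}) \<longleftrightarrow> b' \<inter> b = I" for I b'
    by blast
  have "{b'\<in>B. card (b' \<inter> b) = i} = (\<Union>I\<in>?traces. ?with_trace I)"
  proof (intro equalityI subsetI)
    fix b' assume "b' \<in> {b'\<in>B. card (b' \<inter> b) = i}"
    then show "b' \<in> (\<Union>I\<in>?traces. ?with_trace I)" by (intro UN_I[of "b' \<inter> b"]) auto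
  next
    fix b' assume "b' \<in> (\<Union>I\<in>?traces. ?with_trace I)"
    then obtain I where "I \<in> ?traces" "b' \<in> ?with_trace I" by blast
    then show "b' \<in> {b'\<in>B. card (b' \<inter> b) = i}" using trace_iff[of I b'] by auto
  qed
  moreover have "card (\<Union>I\<in>?traces. ?with_trace I) = (\<Sum>I\<in>?traces. card (?with_trace I))"
  proof (rule card_UN_disjoint)
    have "finite (Pow b)" using finite_block[OF assms] by simp
    then show "finite ?traces" by (rule finite_subset[rotated]) blast
    show "\<forall>I\<in>?traces. finite (?with_trace I)" using finite_blocks by simp
    show "\<forall>I\<in>?traces. \<forall>I'\<in>?traces. I \<noteq> I' \<longrightarrow> ?with_trace I \<inter> ?with_trace I' = {}"
    proof (intro ballI impI equals0I)
      fix I I' b' assume "I \<in> ?traces" "I' \<in> ?traces" "I \<noteq> I'" "b' \<in> ?with_trace I \<inter> ?with_trace I'"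
      then show False using trace_iff[of I b'] trace_iff[of I' b'] by auto
    qed
  qed
  moreover have "real (card (?with_trace I)) = lam t k n i (k - i)" if "I \<in> ?traces" for I
  proof -
    have "card (b - I) = k - i"
      using that block[OF assms] finite_subset[of I b] finite_block[OF assms] by (simp add: card_Diff_subset)
    then show ?thesis using card_blocks_containing_avoiding[OF assms, of "b - I" I] that by auto
  qed
  ultimately have "real (card {b'\<in>B. card (b' \<inter> b) = i}) = (\<Sum>I\<in>?traces. lam t k n i (k - i))"
    by simp
  also have "\<dots> = Lam t k n i"
    using n_subsets[OF finite_block[OF assms]] block[OF assms] by (simp add: Lam_def)
  finally show ?thesis .
qed

end

section \<open>Counting words by support\<close>

definition words_with_supp :: "nat \<Rightarrow> nat \<Rightarrow> nat set \<Rightarrow> (nat \<Rightarrow> nat) set" where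
  "words_with_supp q n S = {x\<in>words q n. supp n x = S}"

lemma supp_subset: "supp n x \<subseteq> {..<n}"
  by (auto simp: supp_def)

lemma bij_betw_restrict_words_with_supp:
  assumes "S \<subseteq> {..<n}" "0 < q"
  shows "bij_betw (\<lambda>x. restrict x S) (words_with_supp q n S) (PiE S (\<lambda>_. {1..<q}))"
proof (rule bij_betw_byWitness[where f'="\<lambda>f i. if i \<in> S then f i else 0"])
  show "\<forall>x\<in>words_with_supp q n S. (\<lambda>i. if i \<in> S then restrict x S i else 0) = x"
    by (auto simp: words_with_supp_def words_def supp_def fun_eq_iff not_less)
  show "(\<lambda>f i. if i \<in> S then f i else 0) ` PiE S (\<lambda>_. {1..<q}) \<subseteq> words_with_supp q n S"
    using assms by (auto simp: words_with_supp_def words_def supp_def PiE_def Pi_def split: if_splits)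
qed (use assms in \<open>auto simp: words_with_supp_def words_def supp_def PiE_def extensional_def\<close>)

lemma card_words_with_supp:
  assumes "S \<subseteq> {..<n}" "0 < q"
  shows "card (words_with_supp q n S) = (q - 1) ^ card S"
    and "finite (words_with_supp q n S)"
proof -
  have "finite S" using assms finite_subset by blast
  then show "card (words_with_supp q n S) = (q - 1) ^ card S" "finite (words_with_supp q n S)"
    using bij_betw_same_card[OF bij_betw_restrict_words_with_supp[OF assms]]
      bij_betw_finite[OF bij_betw_restrict_words_with_supp[OF assms]]
    by (simp_all add: card_PiE finite_PiE)
qed

lemma card_UN_words_with_supp:
  assumes "0 < q" "finite F" "\<And>S. S \<in> F \<Longrightarrow> S \<subseteq> {..<n} \<and> card S = w"
  shows "card (\<Union>S\<in>F. words_with_supp q n S) = card F * (q - 1) ^ w"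
proof -
  have "card (\<Union>S\<in>F. words_with_supp q n S) = (\<Sum>S\<in>F. card (words_with_supp q n S))"
    using assms card_words_with_supp(2) by (intro card_UN_disjoint) (auto simp: words_with_supp_def)
  also have "\<dots> = (\<Sum>S\<in>F. (q - 1) ^ w)" using assms card_words_with_supp(1) by simp
  finally show ?thesis by simp
qed

lemma card_J:
  assumes "0 < q"
  shows "card (J q n w) = (n choose w) * (q - 1) ^ w"
proof -
  have "J q n w = (\<Union>S\<in>{S. S \<subseteq> {..<n} \<and> card S = w}. words_with_supp q n S)"
    using supp_subset by (auto simp: J_def words_with_supp_def wt_def)
  also have "card \<dots> = card {S. S \<subseteq> {..<n} \<and> card S = w} * (q - 1) ^ w"
    by (intro card_UN_words_with_supp[OF assms]) auto
  finally show ?thesis by (simp add: n_subsets)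
qed

lemma A2_iff:
  "x \<in> A2 q n w t \<longleftrightarrow> x \<in> words q n \<and> supp n x \<subseteq> {t..<n} \<and> card (supp n x) = w"
proof -
  have "(\<forall>i<t. x i = 0) \<longleftrightarrow> supp n x \<subseteq> {t..<n}" if "x \<in> words q n"
  proof
    show "supp n x \<subseteq> {t..<n}" if "\<forall>i<t. x i = 0"
      using that by (auto simp: supp_def) (metis leI neq0_conv)
    show "\<forall>i<t. x i = 0" if "supp n x \<subseteq> {t..<n}"
    proof (intro allI impI)
      fix i assume "i < t"
      then have "i \<notin> supp n x" using that by auto
      then show "x i = 0" using \<open>x \<in> words q n\<close> by (cases "i < n") (auto simp: supp_def words_def)
    qed
  qed
  moreover have "supp n x = {i. t \<le> i \<and> i < n \<and> x i \<noteq> 0}" if "supp n x \<subseteq> {t..<n}"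
    using that by (auto simp: supp_def)
  ultimately show ?thesis by (auto simp: A2_def)
qed

lemma card_A2:
  assumes "0 < q"
  shows "card (A2 q n w t) = ((n - t) choose w) * (q - 1) ^ w"
proof -
  have "A2 q n w t = (\<Union>S\<in>{S. S \<subseteq> {t..<n} \<and> card S = w}. words_with_supp q n S)"
    by (auto simp: A2_iff words_with_supp_def)
  also have "card \<dots> = card {S. S \<subseteq> {t..<n} \<and> card S = w} * (q - 1) ^ w"
    by (intro card_UN_words_with_supp[OF assms]) auto
  finally show ?thesis by (simp add: n_subsets)
qed

lemma anticode_A2: "anticode q n w (n - t) (A2 q n w t)"
proof -
  have "{i\<in>{..<n}. x i \<noteq> y i} \<subseteq> {t..<n}" if "x \<in> A2 q n w t" "y \<in> A2 q n w t" for x y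
    using that by (auto simp: A2_def) (metis leI)
  then have "hdist n x y \<le> n - t" if "x \<in> A2 q n w t" "y \<in> A2 q n w t" for x y
    unfolding hdist_def using that by (metis card_atLeastLessThan card_mono finite_atLeastLessThan)
  moreover have "A2 q n w t \<subseteq> J q n w"
    by (auto simp: A2_iff J_def wt_def)
  ultimately show ?thesis unfolding anticode_def by blast
qed

section \<open>Agreements between codewords\<close>

definition zero_set :: "nat \<Rightarrow> (nat \<Rightarrow> nat) \<Rightarrow> nat set" where
  "zero_set n x = {..<n} - supp n x"

definition agreements :: "nat \<Rightarrow> (nat \<Rightarrow> nat) \<Rightarrow> (nat \<Rightarrow> nat) \<Rightarrow> nat" where
  "agreements n x y = card {i\<in>{..<n}. x i = y i \<and> x i \<noteq> 0}"

lemma hdist_add_common_zeros_add_agreements: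
  "hdist n x y + card (zero_set n x \<inter> zero_set n y) + agreements n x y = n"
proof -
  let ?D = "{i\<in>{..<n}. x i \<noteq> y i}" and ?Z = "zero_set n x \<inter> zero_set n y"
    and ?A = "{i\<in>{..<n}. x i = y i \<and> x i \<noteq> 0}"
  have fin: "finite ?D" "finite ?Z" "finite ?A" by (auto simp: zero_set_def)
  have "{..<n} = ?D \<union> ?Z \<union> ?A" by (auto simp: zero_set_def supp_def)
  then have "n = card (?D \<union> ?Z \<union> ?A)" by (metis card_lessThan)
  also have "\<dots> = card (?D \<union> ?Z) + card ?A"
    using fin by (intro card_Un_disjoint) (auto simp: zero_set_def supp_def)
  also have "card (?D \<union> ?Z) = card ?D + card ?Z"
    using fin by (intro card_Un_disjoint) (auto simp: zero_set_def supp_def)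
  finally show ?thesis by (simp add: hdist_def agreements_def)
qed

lemma sum_card_coordinate_values:
  assumes "finite C" "C \<subseteq> words q n" "i < n"
  shows "(\<Sum>v\<in>{1..<q}. card {x\<in>C. x i = v}) = card {x\<in>C. x i \<noteq> 0}"
proof -
  have "{x\<in>C. x i \<noteq> 0} = (\<Union>v\<in>{1..<q}. {x\<in>C. x i = v})"
    using assms by (auto simp: words_def)
  also have "card \<dots> = (\<Sum>v\<in>{1..<q}. card {x\<in>C. x i = v})"
    using assms(1) by (intro card_UN_disjoint) auto
  finally show ?thesis by simp
qed

lemma sum_coordinate_agreements:
  assumes "finite C" "C \<subseteq> words q n" "i < n"
  defines "c v \<equiv> real (card {x\<in>C. x i = v})"
  shows "(\<Sum>x\<in>C. \<Sum>y\<in>C - {x}. of_bool (x i = y i \<and> x i \<noteq> 0)) = (\<Sum>v\<in>{1..<q}. c v * (c v - 1))"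
proof -
  have inner: "(\<Sum>y\<in>C - {x}. of_bool (x i = y i \<and> x i \<noteq> 0)) = of_bool (v \<noteq> 0) * (c v - 1)"
    if "x \<in> C" "x i = v" for x v
  proof -
    have x_in: "x \<in> {y\<in>C. y i = v}" and fin: "finite {y\<in>C. y i = v}"
      using that assms(1) by simp_all
    then have "1 \<le> card {y\<in>C. y i = v}" by (auto simp: Suc_le_eq card_gt_0_iff)
    moreover have "(C - {x}) \<inter> {y. x i = y i \<and> x i \<noteq> 0} = (if v \<noteq> 0 then {y\<in>C. y i = v} - {x} else {})"
      using that by auto
    ultimately show ?thesis
      using x_in fin assms(1) unfolding c_def by (simp add: of_nat_diff)
  qed
  have value_range: "(\<lambda>x. x i) ` C \<subseteq> {..<q}" using assms(2,3) by (auto simp: words_def)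
  have "(\<Sum>x\<in>C. \<Sum>y\<in>C - {x}. of_bool (x i = y i \<and> x i \<noteq> 0))
      = (\<Sum>v<q. \<Sum>x\<in>{x\<in>C. x i = v}. \<Sum>y\<in>C - {x}. of_bool (x i = y i \<and> x i \<noteq> 0))"
    by (rule sum.group[OF assms(1) finite_lessThan value_range, symmetric])
  also have "\<dots> = (\<Sum>v<q. \<Sum>x\<in>{x\<in>C. x i = v}. of_bool (v \<noteq> 0) * (c v - 1))"
    using inner by (intro sum.cong refl) blast
  also have "\<dots> = (\<Sum>v<q. of_bool (v \<noteq> 0) * (c v * (c v - 1)))"
    unfolding c_def by (simp add: mult.left_commute)
  also have "\<dots> = (\<Sum>v\<in>{..<q} \<inter> {v. v \<noteq> 0}. c v * (c v - 1))"
    by simp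
  also have "{..<q} \<inter> {v. v \<noteq> 0} = {1..<q}" by auto
  finally show ?thesis .
qed

lemma sum_agreements_by_coordinate:
  assumes "finite C" "C \<subseteq> words q n"
  shows "(\<Sum>x\<in>C. \<Sum>y\<in>C - {x}. real (agreements n x y))
       = (\<Sum>i<n. \<Sum>v\<in>{1..<q}. real (card {x\<in>C. x i = v}) * (real (card {x\<in>C. x i = v}) - 1))"
proof -
  have agreements_sum: "real (agreements n x y) = (\<Sum>i<n. of_bool (x i = y i \<and> x i \<noteq> 0))" for x y
  proof -
    have "{i\<in>{..<n}. x i = y i \<and> x i \<noteq> 0} = {..<n} \<inter> {i. x i = y i \<and> x i \<noteq> 0}" by blast
    then show ?thesis unfolding agreements_def by simp
  qed
  have "(\<Sum>x\<in>C. \<Sum>y\<in>C - {x}. real (agreements n x y))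
      = (\<Sum>x\<in>C. \<Sum>y\<in>C - {x}. \<Sum>i<n. of_bool (x i = y i \<and> x i \<noteq> 0))"
    by (simp only: agreements_sum)
  also have "\<dots> = (\<Sum>x\<in>C. \<Sum>i<n. \<Sum>y\<in>C - {x}. of_bool (x i = y i \<and> x i \<noteq> 0))"
    by (rule sum.cong[OF refl], rule sum.swap)
  also have "\<dots> = (\<Sum>i<n. \<Sum>x\<in>C. \<Sum>y\<in>C - {x}. of_bool (x i = y i \<and> x i \<noteq> 0))"
    by (rule sum.swap)
  also have "\<dots> = (\<Sum>i<n. \<Sum>v\<in>{1..<q}. real (card {x\<in>C. x i = v}) * (real (card {x\<in>C. x i = v}) - 1))"
    using sum_coordinate_agreements[OF assms] by simp
  finally show ?thesis .
qed

section \<open>Codes of the Steiner size\<close>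

definition blocks_missing_point :: "nat \<Rightarrow> nat \<Rightarrow> nat \<Rightarrow> real" where
  "blocks_missing_point t k n =
     real (n choose t) / real (k choose t) - real ((n - 1) choose (t - 1)) / real ((k - 1) choose (t - 1))"

text \<open>For a fixed block \<open>b\<close> this is \<open>\<Sum> (t - 1 - |b \<inter> b'|)\<close> over the other blocks \<open>b'\<close>;
  the paper's \<open>P\<close> is \<open>M / (2n)\<close> times it.\<close>
definition meeting_deficit :: "nat \<Rightarrow> nat \<Rightarrow> nat \<Rightarrow> real" where
  "meeting_deficit t k n = (\<Sum>i<t - 1. (real t - 1 - real i) * Lam t k n i)"

locale optimal_code =
  fixes q n k t :: nat and C :: "(nat \<Rightarrow> nat) set"
  assumes t_pos: "0 < t" and t_le_k: "t \<le> k" and k_less_n: "k < n"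
    and code: "const_weight_code q n (n - k) (n - t + 1) C"
    and card_code: "card C * (k choose t) = n choose t"
begin

lemma code_subset_J: "C \<subseteq> J q n (n - k)"
  and distance: "x \<in> C \<Longrightarrow> y \<in> C \<Longrightarrow> x \<noteq> y \<Longrightarrow> n - t + 1 \<le> hdist n x y"
  using code unfolding const_weight_code_def by auto

lemma code_subset_words: "C \<subseteq> words q n"
  using code_subset_J by (auto simp: J_def)

lemma card_code_pos: "0 < card C"
proof -
  have "0 < n choose t" using t_le_k k_less_n by simp
  then show ?thesis using card_code by (metis gr0I mult_0)
qed

lemma finite_code: "finite C"
  using card_code_pos card_ge_0_finite by blast

lemma two_le_q: "2 \<le> q"
proof -
  obtain x where "x \<in> C" using card_code_pos by fastforce
  then have x: "x \<in> words q n" "card (supp n x) = n - k"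
    using code_subset_J by (auto simp: J_def wt_def)
  then have "supp n x \<noteq> {}" using k_less_n by auto
  then obtain i where "i < n" "x i \<noteq> 0" by (auto simp: supp_def)
  moreover have "x i < q" using x(1) \<open>i < n\<close> by (simp add: words_def)
  ultimately show ?thesis by linarith
qed

lemma card_zero_set:
  assumes "x \<in> C"
  shows "card (zero_set n x) = k"
proof -
  have "card (supp n x) = n - k" using assms code_subset_J by (auto simp: J_def wt_def)
  then show ?thesis
    using k_less_n supp_subset[of n x] finite_subset[OF supp_subset[of n x]]
    by (simp add: zero_set_def card_Diff_subset)
qed

lemma card_common_zeros_add_agreements:
  assumes "x \<in> C" "y \<in> C" "x \<noteq> y"
  shows "card (zero_set n x \<inter> zero_set n y) + agreements n x y \<le> t - 1"
  using hdist_add_common_zeros_add_agreements[of n x y] distance[OF assms] t_le_k k_less_n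
  by linarith

lemma inj_on_zero_set: "inj_on (zero_set n) C"
proof (rule inj_onI, rule ccontr)
  fix x y assume xy: "x \<in> C" "y \<in> C" "zero_set n x = zero_set n y" "x \<noteq> y"
  then have "card (zero_set n x \<inter> zero_set n y) = k" using card_zero_set by simp
  then show False
    using card_common_zeros_add_agreements[OF xy(1,2,4)] t_le_k t_pos by linarith
qed

lemma steiner_zero_sets: "steiner t k n {..<n} (zero_set n ` C)"
proof -
  have "steiner t k (card {..<n}) {..<n} (zero_set n ` C)"
  proof (rule steiner_of_packing)
    show "b \<subseteq> {..<n} \<and> card b = k" if "b \<in> zero_set n ` C" for b
      using that card_zero_set by (auto simp: zero_set_def)
    show "card (b \<inter> b') < t"
      if blocks: "b \<in> zero_set n ` C" "b' \<in> zero_set n ` C" "b \<noteq> b'" for b b'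
    proof -
      obtain x y where xy: "x \<in> C" "y \<in> C" "x \<noteq> y" and "b = zero_set n x" "b' = zero_set n y"
        using blocks by blast
      then show ?thesis using card_common_zeros_add_agreements[OF xy] t_pos by simp
    qed
    show "card (zero_set n ` C) * (k choose t) = card {..<n} choose t"
      using card_code card_image[OF inj_on_zero_set] by simp
  qed simp
  then show ?thesis by simp
qed

sublocale zero_sets: steiner_system t k n "{..<n}" "zero_set n ` C"
  using steiner_zero_sets t_le_k by unfold_locales

lemma diameter_perfect_code:
  "diameter_perfect q n (n - k) (n - t + 1) C \<and> card C * card (A2 q n (n - k) t) = card (J q n (n - k))"
proof -
  have "n choose k = card C * ((n - t) choose (k - t))"
  proof -
    have "(k choose t) * (n choose k) = (k choose t) * (card C * ((n - t) choose (k - t)))"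
      using choose_mult[of t k n] t_le_k k_less_n card_code by (simp add: algebra_simps)
    then show ?thesis using t_le_k by simp
  qed
  moreover have "(n - t) choose (k - t) = (n - t) choose (n - k)"
    using binomial_symmetric[of "k - t" "n - t"] t_le_k k_less_n by (simp add: diff_diff_eq)
  moreover have "n choose (n - k) = n choose k"
    using binomial_symmetric[of k n] k_less_n by simp
  ultimately have size: "card C * card (A2 q n (n - k) t) = card (J q n (n - k))"
    using card_A2 card_J two_le_q by simp
  then show ?thesis
    using code anticode_A2 t_le_k k_less_n unfolding diameter_perfect_def by fastforce
qed

lemma card_code_filter_zero_set:
  "card {x\<in>C. P (zero_set n x)} = card {b \<in> zero_set n ` C. P b}"
proof -
  have "{b \<in> zero_set n ` C. P b} = zero_set n ` {x\<in>C. P (zero_set n x)}" by auto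
  then show ?thesis
    using inj_on_subset[OF inj_on_zero_set] by (simp add: card_image)
qed

lemma card_nonzero_coordinate:
  assumes "i < n"
  shows "real (card {x\<in>C. x i \<noteq> 0}) = blocks_missing_point t k n"
proof -
  have "card {b \<in> zero_set n ` C. {i} \<subseteq> b} * ((k - 1) choose (t - 1)) = (n - 1) choose (t - 1)"
    using zero_sets.card_blocks_containing[of "{i}"] assms t_pos by simp
  moreover have "0 < (k - 1) choose (t - 1)" using t_le_k by simp
  ultimately have "real (card {x\<in>C. {i} \<subseteq> zero_set n x}) = real ((n - 1) choose (t - 1)) / real ((k - 1) choose (t - 1))"
    unfolding card_code_filter_zero_set by (simp add: field_simps flip: of_nat_mult)
  moreover have "{x\<in>C. {i} \<subseteq> zero_set n x} = C - {x\<in>C. x i \<noteq> 0}"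
    using assms by (auto simp: zero_set_def supp_def)
  moreover have "real (card C) = real (n choose t) / real (k choose t)"
    using card_code t_le_k by (simp add: field_simps flip: of_nat_mult)
  ultimately show ?thesis
    using finite_code by (simp add: card_Diff_subset card_mono of_nat_diff blocks_missing_point_def)
qed

lemma sum_meeting_deficits:
  assumes "x \<in> C"
  shows "(\<Sum>y\<in>C - {x}. real t - 1 - real (card (zero_set n y \<inter> zero_set n x))) = meeting_deficit t k n"
proof -
  let ?meet = "\<lambda>y. card (zero_set n y \<inter> zero_set n x)"
  have "?meet ` (C - {x}) \<subseteq> {..<t}"
    using card_common_zeros_add_agreements[OF assms] t_pos by (fastforce simp: Int_commute)
  then have "(\<Sum>y\<in>C - {x}. real t - 1 - real (?meet y))
      = (\<Sum>j<t. \<Sum>y\<in>{y\<in>C - {x}. ?meet y = j}. real t - 1 - real j)"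
    using finite_code by (subst sum.group[symmetric]) auto
  also have "\<dots> = (\<Sum>j<t. (real t - 1 - real j) * Lam t k n j)"
  proof (rule sum.cong[OF refl])
    fix j assume "j \<in> {..<t}"
    then have "{y\<in>C - {x}. ?meet y = j} = {y\<in>C. ?meet y = j}"
      using card_zero_set[OF assms] t_le_k by auto
    then have "real (card {y\<in>C - {x}. ?meet y = j}) = Lam t k n j"
      using card_code_filter_zero_set[of "\<lambda>b. card (b \<inter> zero_set n x) = j"]
        zero_sets.card_blocks_meeting[of "zero_set n x" j] assms by simp
    then show "(\<Sum>y\<in>{y\<in>C - {x}. ?meet y = j}. real t - 1 - real j) = (real t - 1 - real j) * Lam t k n j"
      by simp
  qed
  also have "\<dots> = meeting_deficit t k n" \<comment> \<open>the term \<open>j = t - 1\<close> vanishes\<close>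
    using t_pos by (cases t) (simp_all add: meeting_deficit_def)
  finally show ?thesis .
qed

lemma sum_agreements_le:
  "(\<Sum>x\<in>C. \<Sum>y\<in>C - {x}. real (agreements n x y)) \<le> real (card C) * meeting_deficit t k n"
proof -
  have "real (agreements n x y) \<le> real t - 1 - real (card (zero_set n y \<inter> zero_set n x))"
    if "x \<in> C" "y \<in> C - {x}" for x y
  proof -
    have "card (zero_set n x \<inter> zero_set n y) + agreements n x y \<le> t - 1"
      using card_common_zeros_add_agreements that by auto
    then have "real (card (zero_set n x \<inter> zero_set n y) + agreements n x y) \<le> real (t - 1)"
      by (rule of_nat_mono)
    then show ?thesis using t_pos by (simp add: of_nat_diff Int_commute)
  qed
  then have "(\<Sum>x\<in>C. \<Sum>y\<in>C - {x}. real (agreements n x y))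
      \<le> (\<Sum>x\<in>C. \<Sum>y\<in>C - {x}. real t - 1 - real (card (zero_set n y \<inter> zero_set n x)))"
    by (intro sum_mono) auto
  also have "\<dots> = real (card C) * meeting_deficit t k n"
    using sum_meeting_deficits by simp
  finally show ?thesis .
qed

lemma agreements_lower_bound:
  assumes "a \<in> \<int>"
  shows "real n * ((real q - 1) * (a * (a - 1)) + 2 * a * (blocks_missing_point t k n - a * (real q - 1)))
           \<le> real (card C) * meeting_deficit t k n"
proof -
  let ?lhs = "(real q - 1) * (a * (a - 1)) + 2 * a * (blocks_missing_point t k n - a * (real q - 1))"
  let ?c = "\<lambda>i v. real (card {x\<in>C. x i = v})"
  have column: "?lhs \<le> (\<Sum>v\<in>{1..<q}. ?c i v * (?c i v - 1))" if "i < n" for i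
  proof -
    have "(\<Sum>v\<in>{1..<q}. ?c i v) = blocks_missing_point t k n"
      using sum_card_coordinate_values[OF finite_code code_subset_words that]
        card_nonzero_coordinate[OF that] unfolding of_nat_sum[symmetric] by simp
    moreover have "real (card {1..<q}) = real q - 1" using two_le_q by (simp add: of_nat_diff)
    ultimately show ?thesis
      using sum_mult_pred_lower_bound[of "{1..<q}" a "?c i"] assms by (simp add: algebra_simps)
  qed
  have "real n * ?lhs = (\<Sum>i<n. ?lhs)" by simp
  also have "\<dots> \<le> (\<Sum>i<n. \<Sum>v\<in>{1..<q}. ?c i v * (?c i v - 1))"
    using column by (intro sum_mono) simp
  also have "\<dots> = (\<Sum>x\<in>C. \<Sum>y\<in>C - {x}. real (agreements n x y))"
    using sum_agreements_by_coordinate[OF finite_code code_subset_words] by simp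
  also have "\<dots> \<le> real (card C) * meeting_deficit t k n"
    by (rule sum_agreements_le)
  finally show ?thesis .
qed

end

theorem mainTheorem16:
  fixes q n k t w :: nat and C :: "(nat \<Rightarrow> nat) set"
  assumes "0 < t" "t \<le> k" "k < n" "w = n - k"
    and "const_weight_code q n w (n - t + 1) C"
    and "real (card C) = real (n choose t) / real (k choose t)"
  shows "(diameter_perfect q n w (n - t + 1) C
           \<and> card C * card (A2 q n w t) = card (J q n w))
         \<and> steiner t k n {..<n} ((\<lambda>x. {..<n} - supp n x) ` C)
         \<and> (let R = real (n choose t) / real (k choose t)
                 - real ((n - 1) choose (t - 1)) / real ((k - 1) choose (t - 1));
             a = \<lfloor>R / (real q - 1)\<rfloor>;
             b = R - real_of_int a * (real q - 1);
             P = real (card C) / (2 * real n) * (\<Sum>i<t - 1. (real t - 1 - real i) * Lam t k n i)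
         in (real q - 1) * (real_of_int a gchoose 2) + b * real_of_int a \<le> real_of_int \<lfloor>P\<rfloor>)
         \<and> (let R = real (n choose t) / real (k choose t)
                 - real ((n - 1) choose (t - 1)) / real ((k - 1) choose (t - 1));
             P = real (card C) / (2 * real n) * (\<Sum>i<t - 1. (real t - 1 - real i) * Lam t k n i)
         in real q - 1 \<ge> R - real_of_int \<lfloor>P\<rfloor>)"
proof -
  have card_code: "card C * (k choose t) = n choose t"
  proof -
    have "real (card C) * real (k choose t) = real (n choose t)" using assms(2,6) by simp
    then show ?thesis by (metis of_nat_eq_iff of_nat_mult)
  qed
  interpret optimal_code q n k t C
    using assms card_code by unfold_locales simp_all
  define R where "R = blocks_missing_point t k n"
  define P where "P = real (card C) / (2 * real n) * meeting_deficit t k n"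
  define a where "a = \<lfloor>R / (real q - 1)\<rfloor>"
  define L where "L = (real q - 1) * (real_of_int a gchoose 2) + (R - real_of_int a * (real q - 1)) * real_of_int a"
  have R_nat: "R = real (card {x\<in>C. x 0 \<noteq> 0})"
    using card_nonzero_coordinate k_less_n unfolding R_def by simp
  have "L \<le> P"
    using agreements_lower_bound[of "of_int a"] k_less_n
    unfolding L_def P_def R_def gbinomial_two by (simp add: field_simps)
  moreover obtain z where "L = of_int z"
  proof -
    have "L \<in> \<int>"
      unfolding L_def R_nat of_int_gbinomial[symmetric]
      by (intro Ints_add Ints_mult Ints_diff) auto
    then show ?thesis using that Ints_cases by blast
  qed
  ultimately have "L \<le> of_int \<lfloor>P\<rfloor>"
    by (simp add: le_floor_iff)
  moreover have "R - (real q - 1) \<le> L"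
    using floor_div_remainder_bound[of "real q - 1" R] two_le_q R_nat
    unfolding L_def a_def by (simp add: mult.commute)
  ultimately show ?thesis
    using diameter_perfect_code steiner_zero_sets assms(4)
    unfolding Let_def blocks_missing_point_def[symmetric] meeting_deficit_def[symmetric]
      R_def[symmetric] P_def[symmetric] a_def[symmetric] L_def[symmetric] zero_set_def
    by simp
qed

end
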